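(* Let $f\colon\mathbb Z^m\to\mathbb Q\cup\{\infty\}$ be SBO jump M-convex and let $r\in\mathbb Z^m$. Let $z^{(1)},\dots,z^{(\ell)}\in\mathbb Z^m$ with $z^{(k)}\equiv r\pmod2$ for all $k$. Let $\lambda^{(1)},\dots,\lambda^{(\ell)}\ge0$ be reals with $\sum_k\lambda^{(k)}=1$, and suppose $z:=\sum_k\lambda^{(k)}z^{(k)}$ is an integer vector with $z\equiv r\pmod2$. Then \[ f(z)\le\sum_{k\in[\ell]}\lambda^{(k)}f(z^{(k)}). \]
   Context: For $x,y\in\mathbb Z^m$, write $x\sqsubseteq y$ if $|x_i|\le|y_i|$ and $x_iy_i\ge0$ for all $i$. A $2$-step decomposition of $d\in\mathbb Z^m$ is a multiset $p^{(1)},\dots,p^{(\ell)}\in\mathbb Z^m$ with $\|p^{(k)}\|_1=2$ and $p^{(k)}\sqsubseteq d$ for all $k$, and $d=\sum_kp^{(k)}$. $f$ is SBO jump M-convex if the following holds for all $z^{(1)},z^{(2)}$ with finite $f$-values. There must exist a $2$-step decomposition $p^{(1)},\dots,p^{(\ell)}$ of $z^{(2)}-z^{(1)}$ and reals $g^{(1)},\dots,g^{(\ell)}$ such that: - $f(z^{(2)})=f(z^{(1)})+\sum_kg^{(k)}$; - $f(z^{(1)}+\sum_{k\in I}p^{(k)})\le f(z^{(1)})+\sum_{k\in I}g^{(k)}$ for all $I\subseteq[\ell]$. Congruence modulo $2$ is componentwise. *)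

theory Defs
  imports Complex_Main "HOL-Library.Extended_Real" "HOL-Library.Function_Algebras"
begin

text \<open>Functions with values in Q \<union> {\<infinity>} are modelled as ereal-valued functions
  whose values are either +\<infinity> or rational.\<close>

definition conf_le :: "('m \<Rightarrow> int) \<Rightarrow> ('m \<Rightarrow> int) \<Rightarrow> bool" where
  "conf_le x y \<longleftrightarrow> (\<forall>i. \<bar>x i\<bar> \<le> \<bar>y i\<bar> \<and> x i * y i \<ge> 0)"

definition norm1 :: "('m::finite \<Rightarrow> int) \<Rightarrow> int" where
  "norm1 x = (\<Sum>i\<in>UNIV. \<bar>x i\<bar>)"

definition two_step_decomp :: "('m::finite \<Rightarrow> int) list \<Rightarrow> ('m \<Rightarrow> int) \<Rightarrow> bool" where
  "two_step_decomp ps d \<longleftrightarrow>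
     (\<forall>p\<in>set ps. norm1 p = 2 \<and> conf_le p d) \<and> sum_list ps = d"

definition rat_or_inf :: "(('m \<Rightarrow> int) \<Rightarrow> ereal) \<Rightarrow> bool" where
  "rat_or_inf f \<longleftrightarrow> (\<forall>x. f x = \<infinity> \<or> (\<exists>q::rat. f x = ereal (of_rat q)))"

definition SBO_jump_M_convex :: "(('m::finite \<Rightarrow> int) \<Rightarrow> ereal) \<Rightarrow> bool" where
  "SBO_jump_M_convex f \<longleftrightarrow>
    (\<forall>z1 z2. f z1 < \<infinity> \<and> f z2 < \<infinity> \<longrightarrow>
      (\<exists>ps gs. two_step_decomp ps (z2 - z1) \<and> length gs = length ps \<and>
         f z2 = f z1 + ereal (sum_list gs) \<and>
         (\<forall>I\<subseteq>{..<length ps}.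
            f (z1 + (\<Sum>k\<in>I. ps ! k)) \<le> f z1 + ereal (\<Sum>k\<in>I. gs ! k))))"

end

theory Submission
  imports Defs "HOL-Library.Product_Lexorder" "HOL-Library.FuncSet"
begin

text \<open>
  Consider the probability distributions \<open>\<mu>\<close> with mean \<open>z\<close> on the finitely many points of the
  parity class of \<open>r\<close> that lie in the bounding box of the points \<open>zs k\<close> and where \<open>f\<close> is finite.
  Minimise lexicographically first the cost \<open>\<Sum>x. \<mu> x * f x\<close> and then the second moment
  \<open>\<Sum>x. \<mu> x * |x - z|\<^sup>2\<close>; a minimiser exists because the minimum over the finitely many basic
  (vertex) distributions is a minimum over all of them.  If a minimiser charged some \<open>x \<noteq> z\<close>,
  the mean condition would give another charged point \<open>x'\<close> and a coordinate \<open>i\<close> where \<open>x - z\<close> and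
  \<open>x' - z\<close> have opposite signs; as both are even, \<open>|x'\<^sub>i - x\<^sub>i| \<ge> 4\<close>.  The exchange axiom for \<open>x, x'\<close>,
  combined with an even cycle through \<open>i\<close> in the multigraph formed by the odd coordinates of the
  2-steps, yields an even vector \<open>S\<close> conformal to \<open>x' - x\<close> with \<open>|S\<^sub>i| = 2\<close> and
  \<open>f (x + S) + f (x' - S) \<le> f x + f x'\<close>.  Moving mass from \<open>x, x'\<close> to \<open>x + S, x' - S\<close> keeps the
  mean, does not increase the cost and strictly decreases the second moment.  Hence the minimiser
  is the point mass at \<open>z\<close>, and \<open>f z\<close> is at most the cost of the distribution with weights \<open>lam k\<close> on the \<open>zs k\<close>.
\<close>

section \<open>Even subgraphs of multigraphs\<close>

definition edge_degree :: "('k \<Rightarrow> 'v set) \<Rightarrow> 'k set \<Rightarrow> 'v \<Rightarrow> nat" where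
  "edge_degree E A v = card {k\<in>A. v \<in> E k}"

lemma edge_degree_insert:
  "edge_degree E (insert k A) v = edge_degree E A v + (if v \<in> E k then 1 else 0)"
  if "finite A" "k \<notin> A"
proof -
  have "{j\<in>insert k A. v \<in> E j} = (if v \<in> E k then insert k {j\<in>A. v \<in> E j} else {j\<in>A. v \<in> E j})"
    by auto
  then show ?thesis using that by (simp add: edge_degree_def)
qed

lemma edge_degree_remove:
  "edge_degree E A v = edge_degree E (A - {k}) v + (if v \<in> E k then 1 else 0)"
  if "finite A" "k \<in> A"
  using edge_degree_insert[of "A - {k}" k E v] that by (simp add: insert_absorb)

lemma edge_degree_cong:
  "edge_degree E A v = edge_degree E' A v" if "\<And>k. k \<in> A \<Longrightarrow> E k = E' k"
  using that unfolding edge_degree_def by (metis (mono_tags, lifting) Collect_cong)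

lemma edge_degree_nonzeroE:
  assumes "edge_degree E A v \<noteq> 0"
  obtains k where "k \<in> A" "v \<in> E k"
  using assms unfolding edge_degree_def by (metis (no_types, lifting) Collect_empty_eq card.empty)

lemma card_2_memberE:
  assumes "card X = 2" "u \<in> X"
  obtains a where "a \<noteq> u" "X = {u, a}"
proof -
  obtain x y where "X = {x, y}" "x \<noteq> y" using assms(1) by (auto simp: card_2_iff)
  then show thesis using assms(2) that[of y] that[of x] by (auto simp: insert_commute)
qed

lemma edge_degree_splice:
  assumes "finite A" "k0 \<in> A" "k1 \<notin> A" "E k0 = {u, a}" "E k1 = {a, b}"
    "u \<noteq> a" "a \<noteq> b" "b \<noteq> u"
  shows "edge_degree E (insert k1 A) v = edge_degree (E(k0 := {u, b})) A v + (if v = a then 2 else 0)"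
proof -
  have "edge_degree (E(k0 := {u, b})) (A - {k0}) v = edge_degree E (A - {k0}) v"
    by (rule edge_degree_cong) simp
  then show ?thesis
    using edge_degree_insert[of A k1 E v] edge_degree_remove[of A k0 E v]
      edge_degree_remove[of A k0 "E(k0 := {u, b})" v] assms
    by auto
qed

lemma even_degree_other_edge:
  assumes "finite K" "\<forall>v. even (edge_degree E K v)" "k0 \<in> K" "a \<in> E k0"
  obtains k1 where "k1 \<in> K" "k1 \<noteq> k0" "a \<in> E k1"
proof -
  have "edge_degree E K a = edge_degree E (K - {k0}) a + 1"
    using edge_degree_remove[of K k0 E a] assms(1,3,4) by simp
  then have "odd (edge_degree E (K - {k0}) a)"
    using assms(2) by (metis even_plus_one_iff)
  then show thesis
    using that by (metis DiffE edge_degree_nonzeroE even_zero singletonI)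
qed

lemma edge_degree_parallel:
  assumes "k0 \<noteq> k1" "E k0 = {u, a}" "E k1 = {u, a}"
  shows "edge_degree E {k0, k1} v = (if v \<in> {u, a} then 2 else 0)"
  using assms edge_degree_insert[of "{k1}" k0 E v] edge_degree_insert[of "{}" k1 E v]
  by (simp add: edge_degree_def)

lemma even_subgraph_unsplice:
  assumes "finite A'" "k1 \<notin> A'" "E k0 = {u, a}" "E k1 = {a, b}" "u \<noteq> a" "a \<noteq> b" "b \<noteq> u"
    "\<forall>v. even (edge_degree (E(k0 := {u, b})) A' v)" "edge_degree (E(k0 := {u, b})) A' u = 2"
  shows "\<exists>A\<subseteq>insert k1 A'. (\<forall>v. even (edge_degree E A v)) \<and> edge_degree E A u = 2"
proof (cases "k0 \<in> A'")
  case True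
  then show ?thesis
    using assms edge_degree_splice[OF assms(1) True assms(2-7)]
    by (intro exI[of _ "insert k1 A'"]) auto
next
  case False
  then have "edge_degree E A' v = edge_degree (E(k0 := {u, b})) A' v" for v
    by (intro edge_degree_cong) auto
  then show ?thesis using assms(8,9) by auto
qed

lemma even_subgraph_degree_2:
  fixes E :: "'k \<Rightarrow> 'v set"
  assumes "finite K" "\<forall>k\<in>K. card (E k) = 2" "\<forall>v. even (edge_degree E K v)"
    "k0 \<in> K" "u \<in> E k0"
  shows "\<exists>A\<subseteq>K. (\<forall>v. even (edge_degree E A v)) \<and> edge_degree E A u = 2"
  using assms
proof (induction "card K" arbitrary: E K k0 rule: less_induct)
  case less
  obtain a where a: "a \<noteq> u" "E k0 = {u, a}"
    using less.prems(2,4,5) card_2_memberE by metis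
  obtain k1 where k1: "k1 \<in> K" "k1 \<noteq> k0" "a \<in> E k1"
    using even_degree_other_edge[OF less.prems(1,3,4)] a by blast
  show ?case
  proof (cases "u \<in> E k1")
    case True
    then have "E k1 = {u, a}"
      using less.prems(2) k1 a by (auto simp: card_2_iff doubleton_eq_iff)
    then show ?thesis
      using edge_degree_parallel[of k0 k1 E u a] k1 a less.prems(4) by (intro exI[of _ "{k0, k1}"]) auto
  next
    case False
    \<comment> \<open>replace the path u - a - b by a single edge u - b and recurse\<close>
    obtain b where b: "b \<noteq> a" "E k1 = {a, b}"
      using less.prems(2) k1 card_2_memberE by metis
    have "b \<noteq> u" using False b by auto
    define E' where "E' = E(k0 := {u, b})"
    define K' where "K' = K - {k1}"
    have K: "K = insert k1 K'" "finite K'" "k0 \<in> K'" "k1 \<notin> K'"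
      using less.prems(1,4) k1 by (auto simp: K'_def)
    have deg: "edge_degree E K v = edge_degree E' K' v + (if v = a then 2 else 0)" for v
      unfolding E'_def K(1) using K(2-4) a b \<open>b \<noteq> u\<close> by (intro edge_degree_splice) auto
    have "even (edge_degree E' K' v)" for v
      using deg[of v] less.prems(3)[rule_format, of v] by (cases "v = a") auto
    moreover have "card K' < card K" using K by simp
    moreover have "\<forall>k\<in>K'. card (E' k) = 2" "u \<in> E' k0"
      using less.prems(2) \<open>b \<noteq> u\<close> by (auto simp: K'_def E'_def)
    ultimately obtain A' where "A' \<subseteq> K'" "\<forall>v. even (edge_degree E' A' v)" "edge_degree E' A' u = 2"
      using less.hyps[of K' E' k0] K(2,3) by blast
    moreover have "finite A'" "k1 \<notin> A'" using \<open>A' \<subseteq> K'\<close> K(2,4) finite_subset by auto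
    ultimately have "\<exists>A\<subseteq>insert k1 A'. (\<forall>v. even (edge_degree E A v)) \<and> edge_degree E A u = 2"
      using even_subgraph_unsplice[of A' k1 E k0 u a b] a b \<open>b \<noteq> u\<close> by (simp add: E'_def)
    then show ?thesis using \<open>A' \<subseteq> K'\<close> K(1) by blast
  qed
qed

section \<open>Conformal two-step decompositions\<close>

lemma sum_fun_apply: "(\<Sum>k\<in>A. p k) i = (\<Sum>k\<in>A. p k i)"
  by (induction A rule: infinite_finite_induct) auto

lemma conformal_coord_iff:
  fixes x d :: int
  shows "\<bar>x\<bar> \<le> \<bar>d\<bar> \<and> 0 \<le> x * d \<longleftrightarrow> (if 0 \<le> d then 0 \<le> x \<and> x \<le> d else d \<le> x \<and> x \<le> 0)"
  by (cases "0 \<le> d"; cases "0 \<le> x") (auto simp: zero_le_mult_iff)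

lemma conf_le_iff_between:
  "conf_le x d \<longleftrightarrow> (\<forall>i. if 0 \<le> d i then 0 \<le> x i \<and> x i \<le> d i else d i \<le> x i \<and> x i \<le> 0)"
  unfolding conf_le_def conformal_coord_iff ..

lemma conf_le_sum_subset:
  assumes "finite K" "\<forall>k\<in>K. conf_le (p k) d" "(\<Sum>k\<in>K. p k) = d" "A \<subseteq> K"
  shows "conf_le (\<Sum>k\<in>A. p k) d"
  unfolding conf_le_iff_between
proof
  fix i
  have d: "d i = (\<Sum>k\<in>K. p k i)" using assms(3) sum_fun_apply by metis
  have fin: "finite A" using assms(1,4) finite_subset by blast
  show "if 0 \<le> d i then 0 \<le> (\<Sum>k\<in>A. p k) i \<and> (\<Sum>k\<in>A. p k) i \<le> d i
        else d i \<le> (\<Sum>k\<in>A. p k) i \<and> (\<Sum>k\<in>A. p k) i \<le> 0"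
  proof (cases "0 \<le> d i")
    case True
    then have "\<forall>k\<in>K. 0 \<le> p k i" using assms(2) by (auto simp: conf_le_iff_between)
    then show ?thesis
      using True assms(1,4) unfolding sum_fun_apply d by (auto intro: sum_nonneg sum_mono2)
  next
    case False
    then have "\<forall>k\<in>K. p k i \<le> 0" using assms(2) by (force simp: conf_le_iff_between)
    moreover have "(\<Sum>k\<in>K. - p k i) \<ge> (\<Sum>k\<in>A. - p k i)"
      using calculation assms(1,4) by (intro sum_mono2) auto
    ultimately show ?thesis
      using False assms(4) unfolding sum_fun_apply d by (auto simp: sum_negf intro: sum_nonpos)
  qed
qed

lemma abs_sum_conf_le:
  assumes "\<forall>k\<in>A. conf_le (p k) d"
  shows "\<bar>(\<Sum>k\<in>A. p k) i\<bar> = (\<Sum>k\<in>A. \<bar>p k i\<bar>)"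
proof (cases "0 \<le> d i")
  case True
  then have "\<forall>k\<in>A. 0 \<le> p k i" using assms by (auto simp: conf_le_iff_between)
  then show ?thesis by (simp add: sum_fun_apply sum_nonneg)
next
  case False
  then have "\<forall>k\<in>A. p k i \<le> 0" using assms by (force simp: conf_le_iff_between)
  then show ?thesis by (simp add: sum_fun_apply sum_nonpos sum_negf)
qed

lemma abs_le_norm1: "\<bar>x i\<bar> \<le> norm1 x"
  unfolding norm1_def by (rule member_le_sum) auto

lemma norm1_eq_2_even_coord:
  assumes "norm1 p = 2" "even (p i)" "p i \<noteq> 0"
  shows "\<bar>p i\<bar> = 2" "\<forall>j. even (p j)"
proof -
  have "\<bar>p i\<bar> \<le> 2" using abs_le_norm1[of p i] assms(1) by simp
  with assms(2,3) show "\<bar>p i\<bar> = 2" by presburger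
  moreover have "norm1 p = \<bar>p i\<bar> + (\<Sum>j\<in>UNIV - {i}. \<bar>p j\<bar>)"
    unfolding norm1_def by (rule sum.remove) auto
  ultimately have "\<forall>j\<in>UNIV - {i}. \<bar>p j\<bar> = 0"
    using assms(1) by (simp add: sum_nonneg_eq_0_iff)
  then show "\<forall>j. even (p j)" using assms(2) by (metis Diff_iff UNIV_I abs_0_eq dvd_0_right singletonD)
qed

lemma norm1_eq_2_odd_coord: "norm1 p = 2 \<Longrightarrow> odd (p i) \<Longrightarrow> \<bar>p i\<bar> = 1"
  using abs_le_norm1[of p i] by presburger

lemma norm1_eq_2_card_odd:
  assumes "norm1 p = 2" "\<exists>j. odd (p j)"
  shows "card {j. odd (p j)} = 2"
proof -
  have "card {j. odd (p j)} = (\<Sum>j | odd (p j). 1::int)" by simp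
  also have "\<dots> \<le> (\<Sum>j | odd (p j). \<bar>p j\<bar>)" by (rule sum_mono) (auto simp: int_one_le_iff_zero_less intro: odd_nonzero)
  also have "\<dots> \<le> norm1 p" unfolding norm1_def by (rule sum_mono2) auto
  finally have "card {j. odd (p j)} \<le> 2" using assms(1) by simp
  moreover have "even (card {j. odd (p j)})"
    using even_sum_iff[of UNIV "\<lambda>j. \<bar>p j\<bar>"] assms(1) by (simp add: norm1_def)
  moreover have "card {j. odd (p j)} \<noteq> 0" using assms(2) by simp
  ultimately show ?thesis by presburger
qed

lemma two_step_decomp_sum:
  assumes "two_step_decomp ps d"
  shows "(\<Sum>k<length ps. ps ! k) = d" "\<forall>k<length ps. norm1 (ps ! k) = 2 \<and> conf_le (ps ! k) d"
  using assms by (auto simp: two_step_decomp_def sum_list_sum_nth atLeast0LessThan)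

lemma two_step_decomp_odd_cycle:
  assumes "two_step_decomp ps d" "\<forall>j. even (d j)" "d i \<noteq> 0"
    "\<forall>k<length ps. (ps ! k) i \<noteq> 0 \<longrightarrow> odd ((ps ! k) i)"
  shows "\<exists>I\<subseteq>{..<length ps}. (\<forall>j. even ((\<Sum>k\<in>I. ps ! k) j)) \<and> \<bar>(\<Sum>k\<in>I. ps ! k) i\<bar> = 2"
proof -
  define n where "n = length ps"
  define p where "p = nth ps"
  have sum: "(\<Sum>k<n. p k j) = d j" for j
    using two_step_decomp_sum(1)[OF assms(1)] by (metis n_def p_def sum_fun_apply)
  have step: "norm1 (p k) = 2" "conf_le (p k) d" if "k < n" for k
    using two_step_decomp_sum(2)[OF assms(1)] that by (auto simp: n_def p_def)
  \<comment> \<open>the steps with odd coordinates form a multigraph on the coordinates, with all degrees even\<close>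
  define E where "E k = {j. odd (p k j)}" for k
  define K where "K = {k. k < n \<and> E k \<noteq> {}}"
  have deg: "edge_degree E A j = card {k\<in>A. odd (p k j)}" for A j
    by (simp add: edge_degree_def E_def)
  have "finite K" by (simp add: K_def)
  moreover have "\<forall>k\<in>K. card (E k) = 2"
    using step(1) norm1_eq_2_card_odd by (auto simp: K_def E_def)
  moreover have "even (edge_degree E K j)" for j
  proof -
    have "{k\<in>K. odd (p k j)} = {k\<in>{..<n}. odd (p k j)}" by (auto simp: K_def E_def)
    then show ?thesis using even_sum_iff[of "{..<n}" "\<lambda>k. p k j"] sum assms(2) deg by simp
  qed
  moreover obtain k0 where "k0 \<in> K" "i \<in> E k0"
  proof -
    obtain k0 where "k0 < n" "p k0 i \<noteq> 0" using sum[of i] assms(3) by (metis lessThan_iff sum.neutral)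
    then show thesis using assms(4) that by (auto simp: K_def E_def n_def p_def)
  qed
  ultimately obtain A where A: "A \<subseteq> K" "\<forall>j. even (edge_degree E A j)" "edge_degree E A i = 2"
    using even_subgraph_degree_2 by metis
  have "finite A" using A(1) \<open>finite K\<close> finite_subset by blast
  have "even ((\<Sum>k\<in>A. p k) j)" for j
    using A(2) even_sum_iff[OF \<open>finite A\<close>, of "\<lambda>k. p k j"] by (simp add: sum_fun_apply deg)
  moreover have "\<bar>(\<Sum>k\<in>A. p k) i\<bar> = 2"
  proof -
    have "\<bar>p k i\<bar> = (if odd (p k i) then 1 else 0)" if "k \<in> A" for k
      using that A(1) assms(4) norm1_eq_2_odd_coord[OF step(1)] by (auto simp: K_def n_def p_def)
    then have "(\<Sum>k\<in>A. \<bar>p k i\<bar>) = card {k\<in>A. odd (p k i)}"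
      using \<open>finite A\<close> by (simp add: sum.If_cases Int_def)
    then show ?thesis
      using abs_sum_conf_le[of A p d i] A(1,3) step(2) by (auto simp: K_def deg)
  qed
  ultimately show ?thesis using A(1) by (intro exI[of _ A]) (auto simp: K_def n_def p_def)
qed

lemma two_step_decomp_even_part:
  assumes "two_step_decomp ps d" "\<forall>j. even (d j)" "d i \<noteq> 0"
  shows "\<exists>I\<subseteq>{..<length ps}. (\<forall>j. even ((\<Sum>k\<in>I. ps ! k) j)) \<and> \<bar>(\<Sum>k\<in>I. ps ! k) i\<bar> = 2"
proof (cases "\<exists>k<length ps. even ((ps ! k) i) \<and> (ps ! k) i \<noteq> 0")
  case True
  then obtain k where k: "k < length ps" "even ((ps ! k) i)" "(ps ! k) i \<noteq> 0" by blast
  then have "norm1 (ps ! k) = 2" using two_step_decomp_sum(2)[OF assms(1)] by blast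
  from norm1_eq_2_even_coord[OF this k(2,3)] show ?thesis using k(1) by (intro exI[of _ "{k}"]) auto
next
  case False
  then show ?thesis using two_step_decomp_odd_cycle[OF assms] by blast
qed

lemma SBO_jump_M_convex_even_exchange:
  assumes "SBO_jump_M_convex f" "f x < \<infinity>" "f y < \<infinity>" "\<forall>j. even (y j - x j)" "y i \<noteq> x i"
  shows "\<exists>S. conf_le S (y - x) \<and> (\<forall>j. even (S j)) \<and> \<bar>S i\<bar> = 2 \<and>
    f (x + S) + f (y - S) \<le> f x + f y"
proof -
  obtain ps gs where ps: "two_step_decomp ps (y - x)" and "length gs = length ps"
    and fy: "f y = f x + ereal (sum_list gs)"
    and bound: "\<And>I. I \<subseteq> {..<length ps} \<Longrightarrow> f (x + (\<Sum>k\<in>I. ps ! k)) \<le> f x + ereal (\<Sum>k\<in>I. gs ! k)"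
    using assms(1-3) unfolding SBO_jump_M_convex_def by blast
  define N where "N = {..<length ps}"
  obtain I where I: "I \<subseteq> N" "\<forall>j. even ((\<Sum>k\<in>I. ps ! k) j)" "\<bar>(\<Sum>k\<in>I. ps ! k) i\<bar> = 2"
    using two_step_decomp_even_part[OF ps, of i] assms(4,5) unfolding N_def by auto
  define S where "S = (\<Sum>k\<in>I. ps ! k)"
  have "(\<Sum>k\<in>N - I. ps ! k) = (y - x) - S"
    using two_step_decomp_sum(1)[OF ps] I(1) by (simp add: N_def S_def sum_diff)
  then have "x + (\<Sum>k\<in>N - I. ps ! k) = y - S" by (simp add: algebra_simps)
  then have "f (y - S) \<le> f x + ereal (\<Sum>k\<in>N - I. gs ! k)"
    using bound[of "N - I"] by (simp add: N_def)
  moreover have "f (x + S) \<le> f x + ereal (\<Sum>k\<in>I. gs ! k)"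
    using bound I(1) by (simp add: N_def S_def)
  moreover have "sum_list gs = (\<Sum>k\<in>I. gs ! k) + (\<Sum>k\<in>N - I. gs ! k)"
    using \<open>length gs = length ps\<close> I(1)
    by (simp add: N_def sum_list_sum_nth atLeast0LessThan sum.subset_diff[of I])
  ultimately have "f (x + S) + f (y - S) \<le> f x + f y"
    using add_mono fy by (fastforce simp: ac_simps)
  moreover have "conf_le S (y - x)"
    using two_step_decomp_sum[OF ps] I(1) unfolding S_def N_def
    by (intro conf_le_sum_subset[of "{..<length ps}"]) auto
  ultimately show ?thesis using I(2,3) by (auto simp: S_def)
qed

section \<open>Distributions with prescribed mean\<close>

locale mean_exchange =
  fixes P :: "('m::finite \<Rightarrow> int) set" and z :: "'m \<Rightarrow> int"
    and F \<Phi> :: "('m \<Rightarrow> int) \<Rightarrow> real"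
  assumes finite_P: "finite P"
    and exchange: "\<lbrakk>x \<in> P; x' \<in> P; (x i - z i) * (x' i - z i) < 0\<rbrakk> \<Longrightarrow>
      \<exists>y\<in>P. \<exists>y'\<in>P. y + y' = x + x' \<and> F y + F y' \<le> F x + F x' \<and> \<Phi> y + \<Phi> y' < \<Phi> x + \<Phi> x'"
begin

definition expect :: "(('m \<Rightarrow> int) \<Rightarrow> real) \<Rightarrow> (('m \<Rightarrow> int) \<Rightarrow> real) \<Rightarrow> real" where
  "expect \<mu> h = (\<Sum>x\<in>P. \<mu> x * h x)"

definition balanced :: "(('m \<Rightarrow> int) \<Rightarrow> real) \<Rightarrow> bool" where
  "balanced \<nu> \<longleftrightarrow> expect \<nu> (\<lambda>_. 1) = 0 \<and> (\<forall>i. expect \<nu> (\<lambda>x. x i) = 0)"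

definition feasible :: "(('m \<Rightarrow> int) \<Rightarrow> real) \<Rightarrow> bool" where
  "feasible \<mu> \<longleftrightarrow> (\<forall>x. 0 \<le> \<mu> x) \<and> (\<forall>x. \<mu> x \<noteq> 0 \<longrightarrow> x \<in> P) \<and>
     expect \<mu> (\<lambda>_. 1) = 1 \<and> (\<forall>i. expect \<mu> (\<lambda>x. x i) = z i)"

\<comment> \<open>the vertices of the polytope of feasible distributions\<close>
definition basic :: "(('m \<Rightarrow> int) \<Rightarrow> real) \<Rightarrow> bool" where
  "basic \<mu> \<longleftrightarrow> (\<forall>\<nu>. balanced \<nu> \<and> (\<forall>x. \<nu> x \<noteq> 0 \<longrightarrow> \<mu> x \<noteq> 0) \<longrightarrow> \<nu> = (\<lambda>_. 0))"

\<comment> \<open>compared lexicographically (\<open>Product_Lexorder\<close>)\<close>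
definition val :: "(('m \<Rightarrow> int) \<Rightarrow> real) \<Rightarrow> real \<times> real" where
  "val \<mu> = (expect \<mu> F, expect \<mu> \<Phi>)"

lemma expect_add_scaled: "expect (\<lambda>x. \<mu> x + t * \<nu> x) h = expect \<mu> h + t * expect \<nu> h"
  by (simp add: expect_def distrib_right sum.distrib sum_distrib_left mult.assoc)

lemma expect_delta: "expect (\<lambda>x. if x = a then 1 else 0) h = h a" if "a \<in> P"
proof -
  have "expect (\<lambda>x. if x = a then 1 else 0) h = (\<Sum>x\<in>P. if x = a then h x else 0)"
    unfolding expect_def by (rule sum.cong) auto
  then show ?thesis using finite_P that by simp
qed

lemma expect_add: "expect (\<lambda>x. \<mu> x + \<nu> x) h = expect \<mu> h + expect \<nu> h"
  by (simp add: expect_def distrib_right sum.distrib)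

lemma expect_diff: "expect (\<lambda>x. \<mu> x - \<nu> x) h = expect \<mu> h - expect \<nu> h"
  by (simp add: expect_def left_diff_distrib sum_subtractf)

lemma feasible_add_scaled:
  "feasible \<mu> \<Longrightarrow> balanced \<nu> \<Longrightarrow> (\<forall>x. 0 \<le> \<mu> x + t * \<nu> x) \<Longrightarrow>
   (\<forall>x. \<mu> x + t * \<nu> x \<noteq> 0 \<longrightarrow> x \<in> P) \<Longrightarrow> feasible (\<lambda>x. \<mu> x + t * \<nu> x)"
  by (simp add: feasible_def balanced_def expect_add_scaled)

lemma feasible_diff_balanced: "feasible \<mu> \<Longrightarrow> feasible \<mu>' \<Longrightarrow> balanced (\<lambda>x. \<mu> x - \<mu>' x)"
  using expect_add_scaled[of \<mu> "-1" \<mu>'] by (simp add: feasible_def balanced_def)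

lemma basic_feasible_eq:
  assumes "feasible \<mu>" "feasible \<mu>'" "basic \<mu>" "{x. \<mu> x \<noteq> 0} = {x. \<mu>' x \<noteq> 0}"
  shows "\<mu> = \<mu>'"
proof -
  have "(\<lambda>x. \<mu> x - \<mu>' x) = (\<lambda>_. 0)"
    using assms feasible_diff_balanced[OF assms(1,2)] unfolding basic_def by (metis (mono_tags) mem_Collect_eq diff_zero)
  then show ?thesis by (meson eq_iff_diff_eq_0 ext)
qed

lemma finite_basic_feasible: "finite {\<mu>. feasible \<mu> \<and> basic \<mu>}"
proof (rule finite_imageD)
  show "inj_on (\<lambda>\<mu>. {x. \<mu> x \<noteq> 0}) {\<mu>. feasible \<mu> \<and> basic \<mu>}"
    using basic_feasible_eq by (intro inj_onI) blast
  have "(\<lambda>\<mu>. {x. \<mu> x \<noteq> 0}) ` {\<mu>. feasible \<mu> \<and> basic \<mu>} \<subseteq> Pow P"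
    unfolding feasible_def by auto
  then show "finite ((\<lambda>\<mu>. {x. \<mu> x \<noteq> 0}) ` {\<mu>. feasible \<mu> \<and> basic \<mu>})"
    using finite_P finite_subset by blast
qed

lemma balanced_uminus: "balanced \<nu> \<Longrightarrow> balanced (\<lambda>x. - \<nu> x)"
  by (simp add: balanced_def expect_def sum_negf)

lemma balanced_exists_pos:
  assumes "balanced \<nu>" "\<forall>x. \<nu> x \<noteq> 0 \<longrightarrow> x \<in> P" "\<nu> \<noteq> (\<lambda>_. 0)"
  shows "\<exists>x\<in>P. 0 < \<nu> x"
proof (rule ccontr)
  assume "\<not> ?thesis"
  moreover have "(\<Sum>x\<in>P. \<nu> x) = 0" using assms(1) by (simp add: balanced_def expect_def)
  ultimately have "\<forall>x\<in>P. - \<nu> x = 0"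
    using finite_P sum_nonneg_eq_0_iff[of P "\<lambda>x. - \<nu> x"] by (simp add: sum_negf not_less)
  then have "\<nu> = (\<lambda>_. 0)" using assms(2) by fastforce
  with assms(3) show False ..
qed

lemma val_add_scaled_le:
  assumes "0 \<le> t" "(0, 0) \<le> val \<nu>"
  shows "val (\<lambda>x. \<mu> x + - t * \<nu> x) \<le> val \<mu>"
  using assms expect_add_scaled[of \<mu> "- t" \<nu> F] expect_add_scaled[of \<mu> "- t" \<nu> \<Phi>]
  by (cases "t = 0") (auto simp: val_def less_eq_prod_def)

lemma not_basic_direction:
  assumes "\<not> basic \<mu>"
  obtains \<nu> where "balanced \<nu>" "\<forall>x. \<nu> x \<noteq> 0 \<longrightarrow> \<mu> x \<noteq> 0" "\<nu> \<noteq> (\<lambda>_. 0)" "(0, 0) \<le> val \<nu>"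
proof -
  obtain \<nu> where \<nu>: "balanced \<nu>" "\<forall>x. \<nu> x \<noteq> 0 \<longrightarrow> \<mu> x \<noteq> 0" "\<nu> \<noteq> (\<lambda>_. 0)"
    using assms unfolding basic_def by blast
  show thesis
  proof (cases "(0, 0) \<le> val \<nu>")
    case False
    then have "(0, 0) \<le> val (\<lambda>x. - \<nu> x)"
      by (auto simp: val_def expect_def sum_negf less_eq_prod_def)
    moreover have "(\<lambda>x. - \<nu> x) \<noteq> (\<lambda>_. 0)" using \<nu>(3) by (metis minus_zero neg_equal_iff_equal)
    ultimately show thesis using that[of "\<lambda>x. - \<nu> x"] \<nu> balanced_uminus by auto
  qed (use \<nu> that in blast)
qed

lemma exists_smaller_support:
  assumes "feasible \<mu>" "\<not> basic \<mu>"
  shows "\<exists>\<mu>'. feasible \<mu>' \<and> {x. \<mu>' x \<noteq> 0} \<subset> {x. \<mu> x \<noteq> 0} \<and> val \<mu>' \<le> val \<mu>"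
proof -
  obtain \<nu> where \<nu>: "balanced \<nu>" "\<forall>x. \<nu> x \<noteq> 0 \<longrightarrow> \<mu> x \<noteq> 0" "\<nu> \<noteq> (\<lambda>_. 0)" "(0, 0) \<le> val \<nu>"
    using not_basic_direction[OF assms(2)] by blast
  have supp: "\<mu> x \<noteq> 0 \<Longrightarrow> x \<in> P" "0 \<le> \<mu> x" for x using assms(1) by (auto simp: feasible_def)
  define Pos where "Pos = {x\<in>P. 0 < \<nu> x}"
  have "finite Pos" "Pos \<noteq> {}"
    using finite_P balanced_exists_pos[OF \<nu>(1)] \<nu>(2,3) supp by (auto simp: Pos_def)
  \<comment> \<open>the largest step along \<open>-\<nu>\<close> that keeps \<open>\<mu>\<close> nonnegative; it kills the support point \<open>x0\<close>\<close>
  define t where "t = Min ((\<lambda>x. \<mu> x / \<nu> x) ` Pos)"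
  have "t \<in> (\<lambda>x. \<mu> x / \<nu> x) ` Pos"
    unfolding t_def using \<open>finite Pos\<close> \<open>Pos \<noteq> {}\<close> by (intro Min_in) auto
  then obtain x0 where x0: "x0 \<in> Pos" "t = \<mu> x0 / \<nu> x0" by blast
  have t_le: "t \<le> \<mu> x / \<nu> x" if "x \<in> Pos" for x
    using \<open>finite Pos\<close> that by (simp add: t_def)
  have "0 \<le> t" using x0 supp by (auto simp: Pos_def)
  define \<mu>' where "\<mu>' x = \<mu> x + - t * \<nu> x" for x
  have "0 \<le> \<mu>' x" for x
  proof (cases "x \<in> Pos")
    case True
    then show ?thesis using t_le[OF True] by (simp add: \<mu>'_def Pos_def pos_le_divide_eq)
  next
    case False
    then have "\<nu> x \<le> 0" using \<nu>(2) supp(1) by (force simp: Pos_def)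
    then have "t * \<nu> x \<le> 0" using \<open>0 \<le> t\<close> by (simp add: mult_nonneg_nonpos)
    then show ?thesis using supp(2)[of x] by (simp add: \<mu>'_def)
  qed
  moreover have sub: "{x. \<mu>' x \<noteq> 0} \<subseteq> {x. \<mu> x \<noteq> 0}" using \<nu>(2) by (auto simp: \<mu>'_def)
  ultimately have "feasible \<mu>'"
    unfolding \<mu>'_def using feasible_add_scaled[OF assms(1) \<nu>(1)] supp(1) by blast
  moreover have "\<mu>' x0 = 0" "\<mu> x0 \<noteq> 0" using x0 \<nu>(2) by (auto simp: \<mu>'_def Pos_def)
  then have "{x. \<mu>' x \<noteq> 0} \<subset> {x. \<mu> x \<noteq> 0}" using sub by blast
  moreover have "val \<mu>' \<le> val \<mu>"
    unfolding \<mu>'_def using \<open>0 \<le> t\<close> \<nu>(4) by (rule val_add_scaled_le)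
  ultimately show ?thesis by blast
qed

lemma exists_basic_le: "feasible \<mu> \<Longrightarrow> \<exists>\<mu>'. feasible \<mu>' \<and> basic \<mu>' \<and> val \<mu>' \<le> val \<mu>"
proof (induction "card {x. \<mu> x \<noteq> 0}" arbitrary: \<mu> rule: less_induct)
  case less
  show ?case
  proof (cases "basic \<mu>")
    case False
    then obtain \<mu>' where \<mu>': "feasible \<mu>'" "{x. \<mu>' x \<noteq> 0} \<subset> {x. \<mu> x \<noteq> 0}" "val \<mu>' \<le> val \<mu>"
      using exists_smaller_support less.prems by blast
    have "finite {x. \<mu> x \<noteq> 0}"
      using less.prems finite_P by (auto simp: feasible_def intro: finite_subset)
    then have "card {x. \<mu>' x \<noteq> 0} < card {x. \<mu> x \<noteq> 0}" using \<mu>'(2) by (rule psubset_card_mono)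
    then show ?thesis using less.hyps \<mu>'(1,3) order_trans by blast
  qed (use less.prems in blast)
qed

lemma exchange_val_less:
  assumes "feasible \<mu>" "0 < \<mu> x" "0 < \<mu> x'" "(x i - z i) * (x' i - z i) < 0"
  shows "\<exists>\<mu>'. feasible \<mu>' \<and> val \<mu>' < val \<mu>"
proof -
  have supp: "\<mu> w \<noteq> 0 \<Longrightarrow> w \<in> P" "0 \<le> \<mu> w" for w using assms(1) by (auto simp: feasible_def)
  then have "x \<in> P" "x' \<in> P" using assms(2,3) by auto
  then obtain y y' where y: "y \<in> P" "y' \<in> P" "y + y' = x + x'"
    and less: "F y + F y' \<le> F x + F x'" "\<Phi> y + \<Phi> y' < \<Phi> x + \<Phi> x'"
    using exchange assms(4) by blast
  have "x \<noteq> x'" using assms(4) by (metis mult_less_0_iff order_less_asym)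
  define \<delta> where "\<delta> a w = (if w = a then 1 else (0::real))" for a w :: "'m \<Rightarrow> int"
  define \<nu> where "\<nu> w = \<delta> y w + \<delta> y' w - \<delta> x w - \<delta> x' w" for w
  have expect_\<nu>: "expect \<nu> h = h y + h y' - h x - h x'" for h
    unfolding \<nu>_def \<delta>_def using y(1,2) \<open>x \<in> P\<close> \<open>x' \<in> P\<close>
    by (simp add: expect_add expect_diff expect_delta)
  have "y j + y' j = x j + x' j" for j using y(3) by (metis plus_fun_apply)
  then have "balanced \<nu>" unfolding balanced_def expect_\<nu> by (simp flip: of_int_add)
  define e where "e = min (\<mu> x) (\<mu> x')"
  have "0 < e" using assms(2,3) by (simp add: e_def)
  have "0 \<le> \<mu> w + e * \<nu> w" for w
    using supp(2)[of w] \<open>0 < e\<close> \<open>x \<noteq> x'\<close> by (auto simp: \<nu>_def \<delta>_def e_def)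
  moreover have "\<mu> w + e * \<nu> w \<noteq> 0 \<Longrightarrow> w \<in> P" for w
    using supp(1) y(1,2) \<open>x \<in> P\<close> \<open>x' \<in> P\<close> by (auto simp: \<nu>_def \<delta>_def split: if_splits)
  ultimately have "feasible (\<lambda>w. \<mu> w + e * \<nu> w)"
    using feasible_add_scaled[OF assms(1) \<open>balanced \<nu>\<close>] by blast
  moreover have "val (\<lambda>w. \<mu> w + e * \<nu> w) < val \<mu>"
    using less \<open>0 < e\<close> by (simp add: val_def expect_add_scaled expect_\<nu> less_prod_def mult_pos_neg mult_nonneg_nonpos)
  ultimately show ?thesis by blast
qed

lemma opposite_coordinate:
  assumes "feasible \<mu>" "0 < \<mu> x" "x \<noteq> z"
  shows "\<exists>x' i. 0 < \<mu> x' \<and> (x i - z i) * (x' i - z i) < 0"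
proof -
  define g where "g w = (\<Sum>i\<in>UNIV. (x i - z i) * (w i - z i))" for w
  have centred: "expect \<mu> (\<lambda>w. w i - z i) = 0" for i
    using assms(1)
    by (simp add: feasible_def expect_def right_diff_distrib sum_subtractf flip: sum_distrib_right)
  have "expect \<mu> (\<lambda>w. g w) = (\<Sum>i\<in>UNIV. (x i - z i) * expect \<mu> (\<lambda>w. w i - z i))"
    unfolding expect_def g_def
    by (simp add: sum_distrib_left sum.swap[of _ P] ac_simps)
  then have "(\<Sum>w\<in>P. \<mu> w * g w) = 0" using centred by (simp add: expect_def)
  moreover have "0 < \<mu> x * g x"
  proof -
    obtain j where "x j \<noteq> z j" using assms(3) by blast
    then have "0 < (x j - z j) * (x j - z j)" by (auto simp: zero_less_mult_iff)
    also have "\<dots> \<le> g x" unfolding g_def by (rule member_le_sum) auto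
    finally show ?thesis using assms(2) by simp
  qed
  moreover have "x \<in> P" using assms(1,2) by (auto simp: feasible_def)
  ultimately obtain x' where "x' \<in> P" "\<mu> x' * g x' < 0"
    using finite_P member_le_sum[of x P "\<lambda>w. \<mu> w * g w"] by (force simp: not_less[symmetric])
  moreover have "0 \<le> \<mu> x'" using assms(1) by (simp add: feasible_def)
  ultimately have "0 < \<mu> x'" "g x' < 0" by (auto simp: mult_less_0_iff)
  moreover obtain i where "(x i - z i) * (x' i - z i) < 0"
    using \<open>g x' < 0\<close> sum_nonneg[of UNIV "\<lambda>i. (x i - z i) * (x' i - z i)"] by (force simp: g_def not_less[symmetric])
  ultimately show ?thesis by blast
qed

lemma exists_val_minimal:
  assumes "feasible \<mu>0"
  obtains \<mu> where "feasible \<mu>" "\<And>\<mu>'. feasible \<mu>' \<Longrightarrow> val \<mu> \<le> val \<mu>'"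
proof -
  define B where "B = {\<mu>. feasible \<mu> \<and> basic \<mu>}"
  have "finite B" "B \<noteq> {}"
    using finite_basic_feasible exists_basic_le[OF assms] by (auto simp: B_def)
  then have "arg_min_on val B \<in> B" "\<forall>\<mu>\<in>B. val (arg_min_on val B) \<le> val \<mu>"
    using arg_min_if_finite[of B val] by (auto simp: not_less)
  moreover have "val (arg_min_on val B) \<le> val \<mu>'" if \<mu>': "feasible \<mu>'" for \<mu>'
  proof -
    obtain \<mu>b where "\<mu>b \<in> B" "val \<mu>b \<le> val \<mu>'" using exists_basic_le[OF \<mu>'] by (auto simp: B_def)
    then show ?thesis using calculation(2) order_trans by blast
  qed
  ultimately show thesis using that[of "arg_min_on val B"] by (auto simp: B_def)
qed

lemma val_minimal_point_mass:
  assumes "feasible \<mu>" "\<And>\<mu>'. feasible \<mu>' \<Longrightarrow> val \<mu> \<le> val \<mu>'"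
  shows "z \<in> P" "\<mu> = (\<lambda>x. if x = z then 1 else 0)"
proof -
  have zero: "\<mu> x = 0" if xz: "x \<noteq> z" for x
  proof (rule ccontr)
    assume "\<mu> x \<noteq> 0"
    then have "0 < \<mu> x" using assms(1) by (simp add: feasible_def order_less_le)
    obtain x' i where "0 < \<mu> x'" "(x i - z i) * (x' i - z i) < 0"
      using opposite_coordinate[OF assms(1) \<open>0 < \<mu> x\<close> xz] by blast
    then obtain \<mu>' where "feasible \<mu>'" "val \<mu>' < val \<mu>"
      using exchange_val_less[OF assms(1) \<open>0 < \<mu> x\<close>] by blast
    then show False using assms(2) by (meson leD)
  qed
  have "expect \<mu> (\<lambda>_. 1) = (\<Sum>x\<in>P. if x = z then \<mu> z else 0)"
    unfolding expect_def by (rule sum.cong) (auto simp: zero)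
  then have "z \<in> P \<and> \<mu> z = 1"
    using assms(1) finite_P by (simp add: feasible_def split: if_splits)
  then show "z \<in> P" and "\<mu> = (\<lambda>x. if x = z then 1 else 0)" using zero by auto
qed

theorem value_at_mean_le_expect:
  assumes "feasible \<mu>"
  shows "z \<in> P" "F z \<le> expect \<mu> F"
proof -
  obtain \<mu>s where opt: "feasible \<mu>s" "\<And>\<mu>'. feasible \<mu>' \<Longrightarrow> val \<mu>s \<le> val \<mu>'"
    using exists_val_minimal[OF assms] by blast
  show "z \<in> P" by (rule val_minimal_point_mass(1)[OF opt])
  then have "expect \<mu>s F = F z"
    using val_minimal_point_mass(2)[OF opt] by (simp add: expect_delta)
  then show "F z \<le> expect \<mu> F"
    using opt(2)[OF assms] by (auto simp: val_def less_eq_prod_def)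
qed

corollary value_at_mean_le_weighted_sum:
  assumes "finite K" "\<forall>k\<in>K. 0 \<le> lam k" "(\<Sum>k\<in>K. lam k) = 1" "\<forall>k\<in>K. lam k \<noteq> 0 \<longrightarrow> zs k \<in> P"
    "\<forall>i. real_of_int (z i) = (\<Sum>k\<in>K. lam k * real_of_int (zs k i))"
  shows "z \<in> P" "F z \<le> (\<Sum>k\<in>K. lam k * F (zs k))"
proof -
  define K' where "K' = {k\<in>K. lam k \<noteq> 0}"
  define \<mu> where "\<mu> x = (\<Sum>k | k \<in> K' \<and> zs k = x. lam k)" for x
  have expect_\<mu>: "expect \<mu> h = (\<Sum>k\<in>K. lam k * h (zs k))" for h
  proof -
    have "expect \<mu> h = (\<Sum>x\<in>P. \<Sum>k | k \<in> K' \<and> zs k = x. lam k * h (zs k))"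
      unfolding expect_def \<mu>_def by (rule sum.cong) (auto simp: sum_distrib_right)
    also have "\<dots> = (\<Sum>k\<in>K'. lam k * h (zs k))"
      using sum.group[of K' P zs "\<lambda>k. lam k * h (zs k)"] assms(1,4) finite_P
      by (simp add: K'_def image_subset_iff)
    also have "\<dots> = (\<Sum>k\<in>K. lam k * h (zs k))"
      using assms(1) by (intro sum.mono_neutral_left) (auto simp: K'_def)
    finally show ?thesis .
  qed
  have "feasible \<mu>"
    unfolding feasible_def expect_\<mu> using assms(2,3,4,5)
    by (auto simp: \<mu>_def K'_def intro!: sum_nonneg elim!: sum.not_neutral_contains_not_neutral)
  then show "z \<in> P" "F z \<le> (\<Sum>k\<in>K. lam k * F (zs k))"
    using value_at_mean_le_expect expect_\<mu>[of F] by metis+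
qed

end

section \<open>The parity class in a box\<close>

definition sq_dist :: "('m::finite \<Rightarrow> int) \<Rightarrow> ('m \<Rightarrow> int) \<Rightarrow> int" where
  "sq_dist x z = (\<Sum>i\<in>UNIV. (x i - z i)\<^sup>2)"

lemma conformal_square_exchange:
  fixes a b s :: int
  assumes "if 0 \<le> b - a then 0 \<le> s \<and> s \<le> b - a else b - a \<le> s \<and> s \<le> 0"
  shows "(a + s)\<^sup>2 + (b - s)\<^sup>2 \<le> a\<^sup>2 + b\<^sup>2"
    and "s \<noteq> 0 \<Longrightarrow> \<bar>s\<bar> < \<bar>b - a\<bar> \<Longrightarrow> (a + s)\<^sup>2 + (b - s)\<^sup>2 < a\<^sup>2 + b\<^sup>2"
proof -
  have eq: "(a + s)\<^sup>2 + (b - s)\<^sup>2 = a\<^sup>2 + b\<^sup>2 - 2 * (s * (b - a - s))"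
    by (simp add: power2_eq_square algebra_simps)
  have "0 \<le> s * (b - a - s)"
    using assms by (auto simp: zero_le_mult_iff split: if_splits)
  then show "(a + s)\<^sup>2 + (b - s)\<^sup>2 \<le> a\<^sup>2 + b\<^sup>2" using eq by linarith
  assume "s \<noteq> 0" "\<bar>s\<bar> < \<bar>b - a\<bar>"
  then have "0 < s * (b - a - s)"
    using assms by (auto simp: zero_less_mult_iff split: if_splits)
  then show "(a + s)\<^sup>2 + (b - s)\<^sup>2 < a\<^sup>2 + b\<^sup>2" using eq by linarith
qed

lemma sq_dist_exchange_less:
  assumes "conf_le s (y - x)" "s i \<noteq> 0" "\<bar>s i\<bar> < \<bar>y i - x i\<bar>"
  shows "sq_dist (x + s) z + sq_dist (y - s) z < sq_dist x z + sq_dist y z"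
proof -
  have between: "if 0 \<le> (y j - z j) - (x j - z j) then 0 \<le> s j \<and> s j \<le> (y j - z j) - (x j - z j)
      else (y j - z j) - (x j - z j) \<le> s j \<and> s j \<le> 0" for j
    using assms(1)[unfolded conf_le_iff_between, rule_format, of j] unfolding minus_apply by simp
  have "(\<Sum>j\<in>UNIV. (x j - z j + s j)\<^sup>2 + (y j - z j - s j)\<^sup>2) < (\<Sum>j\<in>UNIV. (x j - z j)\<^sup>2 + (y j - z j)\<^sup>2)"
  proof (rule sum_strict_mono_ex1)
    show "\<forall>j\<in>UNIV. (x j - z j + s j)\<^sup>2 + (y j - z j - s j)\<^sup>2 \<le> (x j - z j)\<^sup>2 + (y j - z j)\<^sup>2"
      using conformal_square_exchange(1)[OF between] by blast
    show "\<exists>j\<in>UNIV. (x j - z j + s j)\<^sup>2 + (y j - z j - s j)\<^sup>2 < (x j - z j)\<^sup>2 + (y j - z j)\<^sup>2"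
      using conformal_square_exchange(2)[OF between[of i]] assms(2,3) by auto
  qed simp
  then show ?thesis by (simp add: sq_dist_def sum.distrib algebra_simps)
qed

definition parity_box_dom :: "(('m \<Rightarrow> int) \<Rightarrow> ereal) \<Rightarrow> ('m \<Rightarrow> int) \<Rightarrow> ('m \<Rightarrow> int) \<Rightarrow> ('m \<Rightarrow> int) \<Rightarrow> ('m \<Rightarrow> int) set" where
  "parity_box_dom f r lo hi = {x. (\<forall>i. lo i \<le> x i \<and> x i \<le> hi i \<and> x i mod 2 = r i mod 2) \<and> f x < \<infinity>}"

lemma finite_parity_box_dom: "finite (parity_box_dom f r lo (hi :: 'm::finite \<Rightarrow> int))"
proof (rule finite_subset)
  show "parity_box_dom f r lo hi \<subseteq> Pi\<^sub>E UNIV (\<lambda>i. {lo i..hi i})"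
    by (auto simp: parity_box_dom_def PiE_UNIV_domain)
qed (simp add: finite_PiE)

lemma parity_box_dom_exchange:
  assumes "x \<in> parity_box_dom f r lo hi" "y \<in> parity_box_dom f r lo hi"
    "conf_le s (y - x)" "\<forall>j. even (s j)" "f (x + s) + f (y - s) \<le> f x + f y" "\<forall>w. f w \<noteq> -\<infinity>"
  shows "x + s \<in> parity_box_dom f r lo hi" "y - s \<in> parity_box_dom f r lo hi"
proof -
  have "f x + f y < \<infinity>" using assms(1,2) by (simp add: parity_box_dom_def)
  then have "f (x + s) < \<infinity> \<and> f (y - s) < \<infinity>"
    using assms(5,6) by (metis ereal_plus_eq_PInfty less_PInf_Ex_of_nat linorder_not_less order.strict_trans1)
  moreover have "lo j \<le> x j + s j \<and> x j + s j \<le> hi j \<and> lo j \<le> y j - s j \<and> y j - s j \<le> hi j" for j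
  proof -
    have "lo j \<le> x j \<and> x j \<le> hi j \<and> lo j \<le> y j \<and> y j \<le> hi j"
      using assms(1,2) by (simp add: parity_box_dom_def)
    then show ?thesis
      using assms(3)[unfolded conf_le_iff_between, rule_format, of j] unfolding minus_apply
      by (simp split: if_splits)
  qed
  moreover have "(x j + s j) mod 2 = x j mod 2" "(y j - s j) mod 2 = y j mod 2" for j
    using assms(4)[rule_format, of j] by presburger+
  ultimately show "x + s \<in> parity_box_dom f r lo hi" "y - s \<in> parity_box_dom f r lo hi"
    using assms(1,2) by (simp_all add: parity_box_dom_def)
qed

lemma parity_box_dom_real:
  "x \<in> parity_box_dom f r lo hi \<Longrightarrow> \<forall>w. f w \<noteq> -\<infinity> \<Longrightarrow> f x = ereal (real_of_ereal (f x))"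
  by (cases "f x") (auto simp: parity_box_dom_def)

lemma mean_exchange_parity_box_dom:
  assumes "SBO_jump_M_convex f" "\<forall>w. f w \<noteq> -\<infinity>" "\<forall>i. z i mod 2 = r i mod 2"
  shows "mean_exchange (parity_box_dom f r lo hi) z (\<lambda>x. real_of_ereal (f x)) (\<lambda>x. real_of_int (sq_dist x z))"
proof (unfold_locales, rule finite_parity_box_dom)
  fix x x' i
  assume x: "x \<in> parity_box_dom f r lo hi" and x': "x' \<in> parity_box_dom f r lo hi"
    and opposite: "(x i - z i) * (x' i - z i) < 0"
  have ev: "even (x j - z j)" "even (x' j - z j)" for j
    using x x' assms(3) by (auto simp: parity_box_dom_def mod_eq_dvd_iff[symmetric])
  have "even (x' j - x j)" for j using dvd_diff[OF ev(2)[of j] ev(1)[of j]] by simp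
  have far: "4 \<le> \<bar>x' i - x i\<bar>"
    using ev[of i] opposite unfolding mult_less_0_iff by presburger
  obtain s where s: "conf_le s (x' - x)" "\<forall>j. even (s j)" "\<bar>s i\<bar> = 2"
    and f_le: "f (x + s) + f (x' - s) \<le> f x + f x'"
  proof -
    have "f x < \<infinity>" "f x' < \<infinity>" "x' i \<noteq> x i" using x x' far by (auto simp: parity_box_dom_def)
    then show thesis
      using SBO_jump_M_convex_even_exchange[OF assms(1)] that \<open>\<And>j. even (x' j - x j)\<close> by blast
  qed
  have y: "x + s \<in> parity_box_dom f r lo hi" "x' - s \<in> parity_box_dom f r lo hi"
    using parity_box_dom_exchange[OF x x' s(1,2) f_le assms(2)] by auto
  have "real_of_ereal (f (x + s)) + real_of_ereal (f (x' - s)) \<le> real_of_ereal (f x) + real_of_ereal (f x')"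
    using f_le parity_box_dom_real[OF y(1) assms(2)] parity_box_dom_real[OF y(2) assms(2)]
      parity_box_dom_real[OF x assms(2)] parity_box_dom_real[OF x' assms(2)]
    by (metis ereal_less_eq(3) plus_ereal.simps(1))
  moreover have "sq_dist (x + s) z + sq_dist (x' - s) z < sq_dist x z + sq_dist x' z"
    using s(3) far by (intro sq_dist_exchange_less[OF s(1), of i]) auto
  moreover have "(x + s) + (x' - s) = x + x'" by simp
  ultimately show "\<exists>y\<in>parity_box_dom f r lo hi. \<exists>y'\<in>parity_box_dom f r lo hi. y + y' = x + x' \<and>
      real_of_ereal (f y) + real_of_ereal (f y') \<le> real_of_ereal (f x) + real_of_ereal (f x') \<and>
      real_of_int (sq_dist y z) + real_of_int (sq_dist y' z) < real_of_int (sq_dist x z) + real_of_int (sq_dist x' z)"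
    using y by (metis of_int_add of_int_less_iff)
qed

lemma rat_or_inf_neq_MInfty: "rat_or_inf f \<Longrightarrow> f x \<noteq> -\<infinity>"
proof -
  assume "rat_or_inf f"
  then have "f x = \<infinity> \<or> (\<exists>q::rat. f x = ereal (of_rat q))" by (simp add: rat_or_inf_def)
  then show "f x \<noteq> -\<infinity>" by auto
qed

lemma sum_ereal_mult_real:
  fixes g :: "'k \<Rightarrow> ereal"
  assumes "\<forall>k\<in>K. lam k \<noteq> 0 \<longrightarrow> \<bar>g k\<bar> \<noteq> \<infinity>"
  shows "(\<Sum>k\<in>K. ereal (lam k) * g k) = ereal (\<Sum>k\<in>K. lam k * real_of_ereal (g k))"
proof -
  have "ereal (lam k) * g k = ereal (lam k * real_of_ereal (g k))" if k: "k \<in> K" for k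
  proof (cases "lam k = 0")
    case False
    then obtain c where "g k = ereal c" using assms k by (cases "g k") auto
    then show ?thesis by simp
  qed (simp add: zero_ereal_def[symmetric])
  then have "(\<Sum>k\<in>K. ereal (lam k) * g k) = (\<Sum>k\<in>K. ereal (lam k * real_of_ereal (g k)))"
    by (rule sum.cong[OF refl])
  then show ?thesis by simp
qed

theorem lemma19:
  fixes f :: "('m::finite \<Rightarrow> int) \<Rightarrow> ereal"
    and r :: "'m \<Rightarrow> int"
    and l :: nat
    and zs :: "nat \<Rightarrow> ('m \<Rightarrow> int)"
    and lam :: "nat \<Rightarrow> real"
    and z :: "'m \<Rightarrow> int"
  assumes "rat_or_inf f"
    and "SBO_jump_M_convex f"
    and "\<forall>k<l. \<forall>i. zs k i mod 2 = r i mod 2"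
    and "\<forall>k<l. lam k \<ge> 0"
    and "(\<Sum>k<l. lam k) = 1"
    and "\<forall>i. real_of_int (z i) = (\<Sum>k<l. lam k * real_of_int (zs k i))"
    and "\<forall>i. z i mod 2 = r i mod 2"
  shows "f z \<le> (\<Sum>k<l. ereal (lam k) * f (zs k))"
proof (cases "\<exists>k<l. lam k \<noteq> 0 \<and> f (zs k) = \<infinity>")
  case True
  then obtain k where "k < l" "0 < lam k" "f (zs k) = \<infinity>"
    using assms(4) by (auto simp: order_less_le)
  then have "(\<Sum>k<l. ereal (lam k) * f (zs k)) = \<infinity>" by (subst sum_Pinfty) auto
  then show ?thesis by simp
next
  case False
  have no_MInfty: "\<forall>x. f x \<noteq> -\<infinity>" using rat_or_inf_neq_MInfty[OF assms(1)] by blast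
  define lo where "lo i = Min ((\<lambda>k. zs k i) ` {..<l})" for i
  define hi where "hi i = Max ((\<lambda>k. zs k i) ` {..<l})" for i
  interpret mean_exchange "parity_box_dom f r lo hi" z "\<lambda>x. real_of_ereal (f x)" "\<lambda>x. real_of_int (sq_dist x z)"
    using mean_exchange_parity_box_dom assms(2,7) no_MInfty by blast
  have "\<forall>k<l. lam k \<noteq> 0 \<longrightarrow> zs k \<in> parity_box_dom f r lo hi"
    using False assms(3) by (auto simp: parity_box_dom_def lo_def hi_def)
  then have "z \<in> parity_box_dom f r lo hi"
    and "real_of_ereal (f z) \<le> (\<Sum>k<l. lam k * real_of_ereal (f (zs k)))"
    using value_at_mean_le_weighted_sum[of "{..<l}" lam zs] assms(4-6) by auto
  then have "f z \<le> ereal (\<Sum>k<l. lam k * real_of_ereal (f (zs k)))"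
    using parity_box_dom_real no_MInfty by (metis ereal_less_eq(3))
  also have "\<dots> = (\<Sum>k<l. ereal (lam k) * f (zs k))"
    using False no_MInfty by (intro sum_ereal_mult_real[symmetric]) auto
  finally show ?thesis .
qed

end
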